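(* Let $m,n,r$ be positive integers with $r<\min\{m,n\}$ and let $\mathcal{M}=\{X\in\mathbb{R}^{m\times n} : \operatorname{rank}X\le r\}$. There exists a Zariski-open dense subset $\mathcal{U}$ of $\mathcal{M}$ such that the following holds for every $X^*=[x_1^*\cdots x_n^*]\in\mathcal{U}$ and every choice of permutation matrices $\tilde\Pi_1,\dots,\tilde\Pi_n\in\mathcal{P}_m$: setting $\tilde X=[\tilde\Pi_1x_1^*\cdots\tilde\Pi_nx_n^*]$, we have $\operatorname{rank}\underline{\pi}(\tilde X)\ge r$ for every $\underline{\pi}=(\Pi_1,\dots,\Pi_n)\in\mathcal{P}_m^n$, with equality if and only if $\underline{\pi}(\tilde X)=\Pi X^*$ for some $\Pi\in\mathcal{P}_m$.
   Context: $\mathcal{P}_m$ denotes the set of $m\times m$ permutation matrices and $\mathcal{P}_m^n=\prod_{j\in[n]}\mathcal{P}_m$ ($n$ ordered copies). For $\underline{\pi}=(\Pi_1,\dots,\Pi_n)\in\mathcal{P}_m^n$ and a matrix $Y=[y_1\cdots y_n]$ with columns $y_j$, $\underline{\pi}(Y)=[\Pi_1y_1\cdots\Pi_ny_n]$. $\mathcal{M}$ is the real algebraic variety defined by the vanishing of all $(r+1)\times(r+1)$ minors, equipped with the Zariski topology (closed sets are algebraic subvarieties of $\mathcal{M}$). *)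

theory Defs
  imports "HOL-Analysis.Analysis"
begin

text \<open>Real m x n matrices are modelled as real^'n^'m (rows indexed by 'm, columns by 'n).\<close>

inductive_set poly_fun :: "((real^'n^'m) \<Rightarrow> real) set" where
  const: "(\<lambda>X. c) \<in> poly_fun"
| coord: "(\<lambda>X. X $ i $ j) \<in> poly_fun"
| add: "p \<in> poly_fun \<Longrightarrow> q \<in> poly_fun \<Longrightarrow> (\<lambda>X. p X + q X) \<in> poly_fun"
| mult: "p \<in> poly_fun \<Longrightarrow> q \<in> poly_fun \<Longrightarrow> (\<lambda>X. p X * q X) \<in> poly_fun"

definition lowrank :: "nat \<Rightarrow> (real^'n^'m) set" where
  "lowrank r = {X. rank X \<le> r}"

definition zariski_closed_in :: "(real^'n^'m) set \<Rightarrow> (real^'n^'m) set \<Rightarrow> bool" where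
  "zariski_closed_in M Z \<longleftrightarrow> (\<exists>P \<subseteq> poly_fun. Z = {X \<in> M. \<forall>p\<in>P. p X = 0})"

definition zariski_open_in :: "(real^'n^'m) set \<Rightarrow> (real^'n^'m) set \<Rightarrow> bool" where
  "zariski_open_in M U \<longleftrightarrow> U \<subseteq> M \<and> zariski_closed_in M (M - U)"

definition zariski_dense_in :: "(real^'n^'m) set \<Rightarrow> (real^'n^'m) set \<Rightarrow> bool" where
  "zariski_dense_in M U \<longleftrightarrow> (\<forall>Z. zariski_closed_in M Z \<and> U \<subseteq> Z \<longrightarrow> Z = M)"

definition perm_matrices :: "(real^'m^'m) set" where
  "perm_matrices = {P. \<exists>\<sigma>. \<sigma> permutes (UNIV :: 'm set) \<and>
                        P = (\<chi> i j. if \<sigma> i = j then 1 else 0)}"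

definition apply_perms :: "('n \<Rightarrow> real^'m^'m) \<Rightarrow> real^'n^'m \<Rightarrow> real^'n^'m" where
  "apply_perms \<pi> Y = (\<chi> i j. (\<pi> j *v column j Y) $ i)"

end

theory Submission
  imports Defs "HOL-Computational_Algebra.Polynomial"
begin

text \<open>
The rank-\<open>r\<close> matrices form an irreducible variety: they are the products \<open>A B\<close> with \<open>A\<close>
supported on a fixed set of \<open>r\<close> columns, and along the bilinear path
\<open>(A\<^sub>0 + t(A\<^sub>1 - A\<^sub>0))(B\<^sub>0 + t(B\<^sub>1 - B\<^sub>0))\<close> inside the variety every polynomial restricts
to a univariate polynomial. Hence a product of polynomials, each nonzero somewhere on the variety,
is nonzero somewhere, and its non-vanishing locus is open and dense.
For each of the finitely many non-constant tuples \<open>Q\<close> of permutation matrices one exhibits a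
rank-\<open>r\<close> matrix \<open>X\<close> for which \<open>Q(X)\<close> has a nonzero \<open>(r+1)\<close>-minor: two columns of \<open>X\<close>
equal to the same unit vector are sent by \<open>Q\<close> to different unit vectors. Multiplying these minors
with one \<open>r\<close>-minor gives a polynomial whose non-vanishing locus \<open>U\<close> consists of rank-\<open>r\<close> matrices
whose rank strictly increases under every non-constant \<open>Q\<close>, while a constant tuple just
multiplies by one permutation matrix.
\<close>

lemma poly_fun_sum:
  "finite S \<Longrightarrow> (\<And>s. s \<in> S \<Longrightarrow> f s \<in> poly_fun) \<Longrightarrow> (\<lambda>X. \<Sum>s\<in>S. f s X) \<in> poly_fun"
proof (induction S rule: finite_induct)
  case empty then show ?case using poly_fun.const[where c=0] by simp
next
  case (insert x F) then show ?case by (simp add: poly_fun.add)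
qed

lemma poly_fun_prod:
  "finite S \<Longrightarrow> (\<And>s. s \<in> S \<Longrightarrow> f s \<in> poly_fun) \<Longrightarrow> (\<lambda>X. \<Prod>s\<in>S. f s X) \<in> poly_fun"
proof (induction S rule: finite_induct)
  case empty then show ?case using poly_fun.const[where c=1] by simp
next
  case (insert x F) then show ?case by (simp add: poly_fun.mult)
qed

lemma poly_fun_det:
  fixes F :: "real^'n^'m \<Rightarrow> real^'k^'k"
  assumes "\<And>i j. (\<lambda>X. F X $ i $ j) \<in> poly_fun"
  shows "(\<lambda>X. det (F X)) \<in> poly_fun"
  unfolding det_def
  by (intro poly_fun_sum poly_fun.mult poly_fun.const poly_fun_prod assms) (auto intro: finite_subset)

subsection \<open>Permutation matrices\<close>

definition perm_matrix :: "('m \<Rightarrow> 'm) \<Rightarrow> real^'m^'m" where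
  "perm_matrix \<sigma> = (\<chi> i j. if \<sigma> i = j then 1 else 0)"

lemma perm_matrices_eq_image: "perm_matrices = perm_matrix ` {\<sigma>. \<sigma> permutes UNIV}"
  by (auto simp: perm_matrices_def perm_matrix_def)

lemma perm_matrix_mult_vec: "perm_matrix \<sigma> *v x = (\<chi> i. x $ \<sigma> i)"
proof -
  have "(\<Sum>j\<in>UNIV. (if \<sigma> i = j then 1 else 0) * x $ j) = x $ \<sigma> i" for i
    by (simp add: if_distrib[of "\<lambda>y. y * _"] cong: if_cong)
  then show ?thesis by (simp add: perm_matrix_def matrix_vector_mult_def vec_eq_iff)
qed

lemma perm_matrix_mult_axis:
  assumes "\<sigma> permutes UNIV"
  shows "perm_matrix \<sigma> *v axis (\<sigma> a) 1 = axis a (1::real)"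
  using permutes_inj[OF assms]
  by (auto simp: perm_matrix_mult_vec axis_def vec_eq_iff dest: injD)

lemma perm_matrix_mult: "perm_matrix \<sigma> ** perm_matrix \<tau> = perm_matrix (\<tau> \<circ> \<sigma>)"
proof -
  have "(\<Sum>k\<in>UNIV. (if \<sigma> i = k then 1 else 0) * (if \<tau> k = j then 1 else 0))
        = (if \<tau> (\<sigma> i) = j then 1 else (0::real))" for i j
    by (simp add: if_distrib[of "\<lambda>y. y * _"] cong: if_cong)
  then show ?thesis by (simp add: perm_matrix_def matrix_matrix_mult_def vec_eq_iff)
qed

lemma perm_matrices_mult_closed:
  "P \<in> perm_matrices \<Longrightarrow> Q \<in> perm_matrices \<Longrightarrow> P ** Q \<in> perm_matrices"
  unfolding perm_matrices_eq_image by (auto simp: perm_matrix_mult intro: permutes_compose)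

lemma rank_perm_matrix_mult:
  fixes X :: "real^'n^'m"
  assumes "P \<in> perm_matrices"
  shows "rank (P ** X) = rank X"
proof -
  obtain \<sigma> where \<sigma>: "\<sigma> permutes UNIV" "P = perm_matrix \<sigma>"
    using assms unfolding perm_matrices_eq_image by auto
  have "perm_matrix (inv \<sigma>) ** P = mat 1"
    using \<sigma> by (simp add: perm_matrix_mult permutes_inverses(1) o_def)
      (simp add: perm_matrix_def mat_def vec_eq_iff)
  then have "X = perm_matrix (inv \<sigma>) ** (P ** X)" by (simp add: matrix_mul_assoc)
  then have "rank X \<le> rank (P ** X)" by (metis rank_mul_le_right)
  then show ?thesis using rank_mul_le_right[of P X] by linarith
qed

lemma finite_perm_matrix_tuples:
  "finite {Q :: 'n::finite \<Rightarrow> real^'m^'m. \<forall>j. Q j \<in> perm_matrices}"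
proof -
  have "{Q :: 'n \<Rightarrow> real^'m^'m. \<forall>j. Q j \<in> perm_matrices} = PiE UNIV (\<lambda>_. perm_matrices)"
    by (auto simp: PiE_UNIV_domain)
  then show ?thesis
    by (simp add: finite_PiE perm_matrices_eq_image finite_permutations)
qed

lemma column_apply_perms: "column j (apply_perms \<pi> Y) = \<pi> j *v column j Y"
  by (simp add: apply_perms_def column_def vec_eq_iff)

lemma apply_perms_apply_perms:
  "apply_perms \<pi> (apply_perms \<rho> X) = apply_perms (\<lambda>j. \<pi> j ** \<rho> j) X"
  unfolding apply_perms_def[of \<pi> "apply_perms \<rho> X"] column_apply_perms
  by (simp add: apply_perms_def matrix_vector_mul_assoc)

lemma apply_perms_const: "apply_perms (\<lambda>j. P) X = P ** X"
  by (simp add: apply_perms_def matrix_matrix_mult_def matrix_vector_mult_def column_def vec_eq_iff)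

lemma poly_fun_apply_perms: "(\<lambda>X. apply_perms Q X $ i $ j) \<in> poly_fun"
proof -
  have "(\<lambda>X. apply_perms Q X $ i $ j) = (\<lambda>X. \<Sum>l\<in>UNIV. Q j $ i $ l * X $ l $ j)"
    by (simp add: apply_perms_def matrix_vector_mult_def column_def)
  also have "\<dots> \<in> poly_fun"
    by (intro poly_fun_sum poly_fun.mult poly_fun.const poly_fun.coord) auto
  finally show ?thesis .
qed

lemma rank_le_card_columns:
  fixes X :: "real^'n^'m"
  assumes "finite C" "\<And>j. column j X \<in> insert 0 C"
  shows "rank X \<le> card C"
proof -
  have "range (\<lambda>x. X *v x) \<subseteq> span C"
  proof
    fix y assume "y \<in> range (\<lambda>x. X *v x)"
    then obtain x where "y = (\<Sum>j\<in>UNIV. x$j *\<^sub>R column j X)"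
      by (auto simp: matrix_mult_sum scalar_mult_eq_scaleR)
    moreover have "column j X \<in> span C" for j
      using assms(2)[of j] by (auto intro: span_base span_zero)
    ultimately show "y \<in> span C" by (auto intro!: span_sum span_scale)
  qed
  then show ?thesis unfolding rank_dim_range using dim_le_card assms(1) by blast
qed

text \<open>
Column \<open>l\<close> is column \<open>h l\<close> of \<open>Y\<close> for \<open>l \<in> W\<close> and the unit vector \<open>e\<^sub>l\<close> otherwise, so the
determinant is, up to sign, the minor of \<open>Y\<close> with rows \<open>W\<close> and columns \<open>h ` W\<close>.
\<close>
definition minor_matrix :: "'m set \<Rightarrow> ('m \<Rightarrow> 'n) \<Rightarrow> real^'n^'m \<Rightarrow> real^'m^'m" where
  "minor_matrix W h Y = (\<chi> i l. if l \<in> W then Y$i$(h l) else (if i = l then 1 else 0))"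

lemma poly_fun_det_minor_matrix:
  assumes "\<And>i j. (\<lambda>X. F X $ i $ j) \<in> poly_fun"
  shows "(\<lambda>X. det (minor_matrix W h (F X))) \<in> poly_fun"
proof (rule poly_fun_det)
  fix i l show "(\<lambda>X. minor_matrix W h (F X) $ i $ l) \<in> poly_fun"
    by (cases "l \<in> W") (simp_all add: minor_matrix_def assms poly_fun.const)
qed

lemma minor_matrix_unit_columns:
  assumes "\<And>l. l \<in> W \<Longrightarrow> column (h l) Y = axis l 1"
  shows "minor_matrix W h Y = mat 1"
  using assms by (auto simp: minor_matrix_def mat_def vec_eq_iff column_def axis_def)

lemma card_le_rank_if_det_minor_matrix_nonzero:
  fixes Y :: "real^'n^'m"
  assumes "det (minor_matrix W h Y) \<noteq> 0"
  shows "card W \<le> rank Y"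
proof -
  define M where "M = minor_matrix W h Y"
  define E :: "real^'m^'n" where "E = (\<chi> c l. if l \<in> W \<and> h l = c then 1 else 0)"
  let ?V = "{x::real^'m. \<forall>i. i \<notin> W \<longrightarrow> x$i = 0}"
  have inj: "inj (\<lambda>x. M *v x)"
    using assms invertible_det_nz inj_matrix_vector_mult unfolding M_def by blast
  have M_on_V: "M *v x = (Y ** E) *v x" if "x \<in> ?V" for x
  proof -
    have "(M *v x) $ i = ((Y ** E) *v x) $ i" for i
    proof -
      have col: "(\<Sum>c\<in>UNIV. Y$i$c * (if l \<in> W \<and> h l = c then 1 else 0))
                 = (if l\<in>W then Y$i$(h l) else 0)" for l
        by (cases "l \<in> W") (simp_all add: eq_commute[of "h l"] if_distrib[of "\<lambda>x. _ * x"] cong: if_cong)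
      have "(M *v x) $ i = (\<Sum>l\<in>UNIV. (if l \<in> W then Y$i$(h l) else 0) * x $ l)"
        using that by (auto simp: matrix_vector_mult_def M_def minor_matrix_def intro!: sum.cong)
      also have "\<dots> = ((Y ** E) *v x) $ i"
        by (simp add: matrix_vector_mult_def matrix_matrix_mult_def E_def col)
      finally show ?thesis .
    qed
    then show ?thesis by (simp add: vec_eq_iff)
  qed
  have "vec.dim ?V = card W" by (rule dim_substandard_cart)
  then have "card W = dim ?V" by (simp add: dim_vec_eq)
  also have "\<dots> = dim ((\<lambda>x. M *v x) ` ?V)"
    by (rule dim_image_eq[symmetric]) (auto intro: inj_on_subset[OF inj])
  also have "(\<lambda>x. M *v x) ` ?V = (\<lambda>x. Y *v (E *v x)) ` ?V"
    using M_on_V by (auto simp: matrix_vector_mul_assoc)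
  also have "dim \<dots> \<le> dim (range (\<lambda>x. Y *v x))" by (rule dim_subset) auto
  finally show ?thesis by (simp add: rank_dim_range)
qed

subsection \<open>The variety of rank-\<open>r\<close> matrices\<close>

definition col_supported :: "'m set \<Rightarrow> real^'m^'m \<Rightarrow> bool" where
  "col_supported S A \<longleftrightarrow> (\<forall>i l. l \<notin> S \<longrightarrow> A$i$l = 0)"

lemma col_supported_affine_comb:
  "col_supported S A\<^sub>0 \<Longrightarrow> col_supported S A\<^sub>1 \<Longrightarrow> col_supported S (A\<^sub>0 + t *\<^sub>R (A\<^sub>1 - A\<^sub>0))"
  by (simp add: col_supported_def)

lemma rank_col_supported_mult:
  fixes B :: "real^'n^'m"
  assumes "col_supported S A"
  shows "rank (A ** B) \<le> card S"
proof -
  have "rank A \<le> card ((\<lambda>l. column l A) ` S)"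
    using assms by (intro rank_le_card_columns) (auto simp: col_supported_def column_def vec_eq_iff)
  also have "\<dots> \<le> card S" by (rule card_image_le) simp
  finally show ?thesis using rank_mul_le_left[of A B] by linarith
qed

lemma col_supported_factorization:
  fixes X :: "real^'n^'m"
  assumes "rank X \<le> card S"
  obtains A B where "col_supported S A" "X = A ** B"
proof -
  let ?V = "range (\<lambda>x. X *v x)"
  obtain Bs where Bs: "Bs \<subseteq> ?V" "independent Bs" "?V \<subseteq> span Bs" "card Bs = dim ?V"
    using basis_exists by blast
  have fin: "finite Bs" using Bs(2) finiteI_independent by blast
  have "card Bs \<le> card S" using Bs(4) assms rank_dim_range by metis
  then obtain \<phi> where \<phi>: "\<phi> ` Bs \<subseteq> S" "inj_on \<phi> Bs" using card_le_inj[OF fin finite] by blast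
  define A :: "real^'m^'m" where
    "A = (\<chi> i l. if l \<in> \<phi> ` Bs then (inv_into Bs \<phi> l)$i else 0)"
  have "col_supported S A" using \<phi>(1) by (auto simp: col_supported_def A_def)
  have "A *v axis (\<phi> b) 1 = b" if "b \<in> Bs" for b
    using that \<phi>(2) by (simp add: matrix_vector_mult_basis column_def A_def vec_eq_iff)
  then have "Bs \<subseteq> range (\<lambda>x. A *v x)" by (metis image_eqI rangeI subsetI)
  then have "span Bs \<subseteq> range (\<lambda>x. A *v x)"
    by (intro span_minimal) (simp_all add: linear_subspace_image)
  then have "X *v axis j 1 \<in> range (\<lambda>x. A *v x)" for j using Bs(3) by blast
  then have "\<forall>j. \<exists>y. A *v y = X *v axis j 1" by (metis imageE)
  then obtain y where y: "\<And>j. A *v y j = X *v axis j 1" by metis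
  have "(A ** (\<chi> l j. y j $ l)) $ i $ j = X $ i $ j" for i j
  proof -
    have "(A ** (\<chi> l j. y j $ l)) $ i $ j = (A *v y j) $ i"
      by (simp add: matrix_matrix_mult_def matrix_vector_mult_def)
    then show ?thesis by (simp add: y matrix_vector_mult_basis column_def)
  qed
  then have "A ** (\<chi> l j. y j $ l) = X" by (simp add: vec_eq_iff)
  with \<open>col_supported S A\<close> show ?thesis using that by metis
qed

lemma lowrank_eq_col_supported_products:
  assumes "card S = r"
  shows "lowrank r = {A ** B | A B. col_supported S A}"
proof
  show "lowrank r \<subseteq> {A ** B | A B. col_supported S A}"
    using assms col_supported_factorization unfolding lowrank_def by blast
  show "{A ** B | A B. col_supported S A} \<subseteq> lowrank r"
    using assms rank_col_supported_mult unfolding lowrank_def by blast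
qed

definition bilinear_path ::
  "real^'m^'m \<Rightarrow> real^'n^'m \<Rightarrow> real^'m^'m \<Rightarrow> real^'n^'m \<Rightarrow> real \<Rightarrow> real^'n^'m" where
  "bilinear_path A\<^sub>0 B\<^sub>0 A\<^sub>1 B\<^sub>1 t = (A\<^sub>0 + t *\<^sub>R (A\<^sub>1 - A\<^sub>0)) ** (B\<^sub>0 + t *\<^sub>R (B\<^sub>1 - B\<^sub>0))"

lemma bilinear_path_0: "bilinear_path A\<^sub>0 B\<^sub>0 A\<^sub>1 B\<^sub>1 0 = A\<^sub>0 ** B\<^sub>0"
  and bilinear_path_1: "bilinear_path A\<^sub>0 B\<^sub>0 A\<^sub>1 B\<^sub>1 1 = A\<^sub>1 ** B\<^sub>1"
  by (simp_all add: bilinear_path_def)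

lemma poly_fun_along_bilinear_path:
  assumes "p \<in> poly_fun"
  obtains q where "\<And>t. p (bilinear_path A\<^sub>0 B\<^sub>0 A\<^sub>1 B\<^sub>1 t) = poly q t"
proof -
  from assms have "\<exists>q. \<forall>t. p (bilinear_path A\<^sub>0 B\<^sub>0 A\<^sub>1 B\<^sub>1 t) = poly q t"
  proof induction
    case (const c) then show ?case by (intro exI[of _ "[:c:]"]) simp
  next
    case (coord i j)
    show ?case
      by (intro exI[of _ "\<Sum>l\<in>UNIV. [:A\<^sub>0$i$l, A\<^sub>1$i$l - A\<^sub>0$i$l:] * [:B\<^sub>0$l$j, B\<^sub>1$l$j - B\<^sub>0$l$j:]"])
        (simp add: bilinear_path_def matrix_matrix_mult_def poly_sum algebra_simps)
  next
    case (add p q) then show ?case by (metis poly_add)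
  next
    case (mult p q) then show ?case by (metis poly_mult)
  qed
  then show ?thesis using that by blast
qed

lemma lowrank_vanishing_ideal_prime:
  fixes p f :: "real^'n^'m \<Rightarrow> real"
  assumes "r \<le> CARD('m)" "p \<in> poly_fun" "f \<in> poly_fun"
    and "\<forall>X\<in>lowrank r. p X * f X = 0" and "\<exists>X\<in>lowrank r. f X \<noteq> 0"
    and "X \<in> lowrank r"
  shows "p X = 0"
proof -
  obtain S :: "'m set" where S: "card S = r"
    using obtain_subset_with_card_n[of r "UNIV :: 'm set"] assms(1) by auto
  note lowrank = lowrank_eq_col_supported_products[OF S]
  obtain A\<^sub>0 B\<^sub>0 where A\<^sub>0: "col_supported S A\<^sub>0" and X: "X = A\<^sub>0 ** B\<^sub>0"
    using assms(6) lowrank by blast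
  obtain A\<^sub>1 B\<^sub>1 where A\<^sub>1: "col_supported S A\<^sub>1" and f1: "f (A\<^sub>1 ** B\<^sub>1) \<noteq> 0"
    using assms(5) unfolding lowrank by auto
  let ?\<gamma> = "bilinear_path A\<^sub>0 B\<^sub>0 A\<^sub>1 B\<^sub>1"
  obtain qp where qp: "\<And>t. p (?\<gamma> t) = poly qp t"
    using poly_fun_along_bilinear_path[OF assms(2)] by blast
  obtain qf where qf: "\<And>t. f (?\<gamma> t) = poly qf t"
    using poly_fun_along_bilinear_path[OF assms(3)] by blast
  have "?\<gamma> t \<in> lowrank r" for t
    unfolding lowrank bilinear_path_def using col_supported_affine_comb[OF A\<^sub>0 A\<^sub>1] by blast
  then have "poly (qp * qf) t = 0" for t using assms(4) by (simp flip: qp qf)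
  then have "qp * qf = 0" using poly_all_0_iff_0 by blast
  moreover have "qf \<noteq> 0" using f1 qf[of 1] by (auto simp: bilinear_path_1)
  ultimately have "qp = 0" by simp
  then show ?thesis using qp[of 0] X by (simp add: bilinear_path_0)
qed

lemma lowrank_nonvanishing_mult:
  fixes f g :: "real^'n^'m \<Rightarrow> real"
  assumes "r \<le> CARD('m)" "f \<in> poly_fun" "g \<in> poly_fun"
    and "\<exists>X\<in>lowrank r. f X \<noteq> 0" "\<exists>X\<in>lowrank r. g X \<noteq> 0"
  shows "\<exists>X\<in>lowrank r. f X * g X \<noteq> 0"
  using lowrank_vanishing_ideal_prime[OF assms(1-3) _ assms(5)] assms(4) by blast

lemma lowrank_nonvanishing_prod:
  fixes g :: "'a \<Rightarrow> real^'n^'m \<Rightarrow> real"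
  assumes "r \<le> CARD('m)" "finite F"
    and "\<And>Q. Q \<in> F \<Longrightarrow> g Q \<in> poly_fun \<and> (\<exists>X\<in>lowrank r. g Q X \<noteq> 0)"
  shows "\<exists>X\<in>lowrank r. (\<Prod>Q\<in>F. g Q X) \<noteq> 0"
  using assms(2,3)
proof (induction F rule: finite_induct)
  case empty
  have "0 \<in> lowrank r" by (simp add: lowrank_def)
  then show ?case by auto
next
  case (insert Q F)
  then have "\<exists>X\<in>lowrank r. g Q X * (\<Prod>Q\<in>F. g Q X) \<noteq> 0"
    by (intro lowrank_nonvanishing_mult assms(1) poly_fun_prod) auto
  then show ?case using insert by simp
qed

lemma lowrank_nonvanishing_open_dense:
  fixes f :: "real^'n^'m \<Rightarrow> real"
  assumes "r \<le> CARD('m)" "f \<in> poly_fun" "\<exists>X\<in>lowrank r. f X \<noteq> 0"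
  defines "U \<equiv> {X \<in> lowrank r. f X \<noteq> 0}"
  shows "zariski_open_in (lowrank r) U" "zariski_dense_in (lowrank r) U"
proof -
  show "zariski_open_in (lowrank r) U"
    unfolding zariski_open_in_def zariski_closed_in_def U_def
    by (intro conjI exI[of _ "{f}"]) (auto simp: assms(2))
  show "zariski_dense_in (lowrank r) U"
    unfolding zariski_dense_in_def
  proof (intro allI impI)
    fix Z assume "zariski_closed_in (lowrank r) Z \<and> U \<subseteq> Z"
    then obtain P where P: "P \<subseteq> poly_fun" "Z = {X \<in> lowrank r. \<forall>p\<in>P. p X = 0}" "U \<subseteq> Z"
      unfolding zariski_closed_in_def by blast
    have "p X = 0" if "p \<in> P" "X \<in> lowrank r" for p X
    proof (rule lowrank_vanishing_ideal_prime[OF assms(1) _ assms(2) _ assms(3) that(2)])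
      show "p \<in> poly_fun" using that P(1) by blast
      show "\<forall>X\<in>lowrank r. p X * f X = 0" using that(1) P(2,3) by (auto simp: U_def)
    qed
    then show "Z = lowrank r" using P(2) by blast
  qed
qed

lemma exists_matrix_with_unit_columns:
  fixes h :: "'k \<Rightarrow> 'n::finite" and \<rho> :: "'k \<Rightarrow> 'm::finite"
  assumes "finite W" "inj_on h W"
  obtains X :: "real^'n^'m"
  where "\<And>l. l \<in> W \<Longrightarrow> column (h l) X = axis (\<rho> l) 1" "rank X \<le> card (\<rho> ` W)"
proof -
  define X :: "real^'n^'m"
    where "X = (\<chi> i c. if c \<in> h ` W then axis (\<rho> (inv_into W h c)) 1 $ i else 0)"
  have col: "column c X = (if c \<in> h ` W then axis (\<rho> (inv_into W h c)) 1 else 0)" for c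
    by (simp add: X_def column_def vec_eq_iff)
  have "rank X \<le> card ((\<lambda>a. axis a (1::real)) ` \<rho> ` W)"
    using assms by (intro rank_le_card_columns) (auto simp: col)
  also have "\<dots> \<le> card (\<rho> ` W)" using assms(1) by (intro card_image_le) simp
  finally have "rank X \<le> card (\<rho> ` W)" .
  moreover have "column (h l) X = axis (\<rho> l) 1" if "l \<in> W" for l
    using that assms(2) by (simp add: col)
  ultimately show ?thesis using that by blast
qed

lemma exists_lowrank_nonzero_minor:
  assumes "r \<le> CARD('m)" "r \<le> CARD('n)"
  obtains W :: "'m::finite set" and h :: "'m \<Rightarrow> 'n::finite"
  where "card W = r" "\<exists>X\<in>lowrank r. det (minor_matrix W h X) \<noteq> 0"
proof -
  obtain W :: "'m set" where W: "card W = r"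
    using obtain_subset_with_card_n[of r "UNIV :: 'm set"] assms(1) by auto
  obtain h :: "'m \<Rightarrow> 'n" where "inj_on h W"
    using card_le_inj[of W "UNIV :: 'n set"] W assms(2) by auto
  then obtain X :: "real^'n^'m" where X: "\<And>l. l \<in> W \<Longrightarrow> column (h l) X = axis (id l) 1"
      "rank X \<le> card (id ` W)"
    using exists_matrix_with_unit_columns[where \<rho>=id, OF finite] by blast
  have "minor_matrix W h X = mat 1" using X(1) by (intro minor_matrix_unit_columns) simp
  moreover have "X \<in> lowrank r" using X(2) W by (simp add: lowrank_def)
  ultimately show ?thesis by (intro that[of W h, OF W] bexI[of _ X]) simp_all
qed

lemma exists_inj_on_mapping_two:
  fixes W :: "'a set" and x y :: "'b::finite"
  assumes "finite W" "card W \<le> CARD('b)" "a \<in> W" "b \<in> W" "a \<noteq> b" "x \<noteq> y"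
  obtains h :: "'a \<Rightarrow> 'b" where "inj_on h W" "h a = x" "h b = y"
proof -
  let ?W' = "W - {a, b}"
  have "card ?W' \<le> card (UNIV - {x, y})"
    using assms by (simp add: card_Diff_subset)
  then obtain g where g: "g ` ?W' \<subseteq> UNIV - {x, y}" "inj_on g ?W'"
    using card_le_inj[OF finite_Diff[OF assms(1)] finite] by blast
  define h where "h = g(a := x, b := y)"
  have h_W': "h ` ?W' = g ` ?W'" by (auto simp: h_def)
  have "inj_on h ?W'" using g(2) by (rule inj_on_cong[THEN iffD1, rotated]) (simp add: h_def)
  moreover have "h a = x" "h b = y" using assms(5) by (simp_all add: h_def)
  ultimately have "inj_on h (insert a (insert b ?W'))"
    using g(1) h_W' assms(5,6) by auto
  moreover have "insert a (insert b ?W') = W" using assms(3,4) by auto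
  ultimately show ?thesis using that \<open>h a = x\<close> \<open>h b = y\<close> by simp
qed

text \<open>
Columns \<open>j\<close> and \<open>k\<close> of the witness are both \<open>e\<^sub>\<sigma>\<^sub>j\<^sub>(\<^sub>u\<^sub>)\<close>, which \<open>Q\<^sub>j\<close> and \<open>Q\<^sub>k\<close> move to the
different unit vectors \<open>e\<^sub>u\<close> and \<open>e\<^sub>u\<^sub>'\<close>; the other \<open>r - 1\<close> columns are chosen to become further
unit vectors. So the witness has rank \<open>r\<close>, while \<open>Q(X)\<close> has an identity \<open>(r+1)\<close>-minor.
\<close>
lemma exists_lowrank_nonzero_minor_apply_perms:
  fixes Q :: "'n::finite \<Rightarrow> real^'m::finite^'m"
  assumes "0 < r" "r < CARD('m)" "r < CARD('n)"
    and "\<forall>j. Q j \<in> perm_matrices" "Q j \<noteq> Q k"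
  obtains W :: "'m set" and h :: "'m \<Rightarrow> 'n"
  where "card W = r + 1" "\<exists>X\<in>lowrank r. det (minor_matrix W h (apply_perms Q X)) \<noteq> 0"
proof -
  have "\<forall>c. \<exists>\<sigma>. \<sigma> permutes UNIV \<and> Q c = perm_matrix \<sigma>"
    using assms(4) unfolding perm_matrices_eq_image by blast
  then obtain \<sigma> where \<sigma>: "\<And>c. \<sigma> c permutes UNIV" "\<And>c. Q c = perm_matrix (\<sigma> c)" by metis
  have "\<sigma> j \<noteq> \<sigma> k" using assms(5) \<sigma>(2) by metis
  then obtain u where u: "\<sigma> j u \<noteq> \<sigma> k u" by auto
  define u' where "u' = inv (\<sigma> k) (\<sigma> j u)"
  have \<sigma>u': "\<sigma> k u' = \<sigma> j u" using permutes_inverses(1)[OF \<sigma>(1)] by (simp add: u'_def)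
  have "u \<noteq> u'" using \<sigma>u' u by auto
  obtain W where W: "{u, u'} \<subseteq> W" "card W = r + 1"
    using exists_subset_between[of "{u, u'}" "r + 1" UNIV] assms(1,2) \<open>u \<noteq> u'\<close> by auto
  obtain h :: "'m \<Rightarrow> 'n" where h: "inj_on h W" "h u = j" "h u' = k"
    using exists_inj_on_mapping_two[of W u u' j k] W assms(3,5) \<open>u \<noteq> u'\<close> by auto
  define \<rho> where "\<rho> l = \<sigma> (h l) l" for l
  obtain X :: "real^'n^'m" where X: "\<And>l. l \<in> W \<Longrightarrow> column (h l) X = axis (\<rho> l) 1"
      "rank X \<le> card (\<rho> ` W)"
    using exists_matrix_with_unit_columns[OF finite h(1)] by blast
  have "\<rho> u' = \<rho> u" by (simp add: \<rho>_def h(2,3) \<sigma>u')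
  then have "\<rho> u' \<in> \<rho> ` (W - {u'})" using W(1) \<open>u \<noteq> u'\<close> by (metis Diff_iff empty_iff image_eqI insert_iff insert_subset)
  then have "\<rho> ` W = \<rho> ` (W - {u'})" using W(1) by (metis image_insert insert_Diff insert_absorb insert_subset)
  then have "card (\<rho> ` W) \<le> r" using card_image_le[of "W - {u'}" \<rho>] W by simp
  then have "X \<in> lowrank r" using X(2) by (simp add: lowrank_def)
  have "column (h l) (apply_perms Q X) = axis l 1" if "l \<in> W" for l
    using X(1)[OF that] by (simp add: column_apply_perms \<sigma> \<rho>_def perm_matrix_mult_axis)
  then have "det (minor_matrix W h (apply_perms Q X)) \<noteq> 0" by (simp add: minor_matrix_unit_columns)
  then show ?thesis using that W(2) \<open>X \<in> lowrank r\<close> by blast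
qed

definition nonconstant_perm_tuples :: "('n \<Rightarrow> real^'m^'m) set" where
  "nonconstant_perm_tuples = {Q. (\<forall>j. Q j \<in> perm_matrices) \<and> (\<exists>j k. Q j \<noteq> Q k)}"

lemma finite_nonconstant_perm_tuples:
  "finite (nonconstant_perm_tuples :: ('n::finite \<Rightarrow> real^'m::finite^'m) set)"
  by (rule finite_subset[OF _ finite_perm_matrix_tuples]) (auto simp: nonconstant_perm_tuples_def)

lemma exists_rank_certificate:
  assumes "0 < r" "r < CARD('m::finite)" "r < CARD('n::finite)"
  obtains f :: "real^'n^'m \<Rightarrow> real"
  where "f \<in> poly_fun" "\<exists>X\<in>lowrank r. f X \<noteq> 0" "\<And>X. f X \<noteq> 0 \<Longrightarrow> r \<le> rank X"
    "\<And>Q X. Q \<in> nonconstant_perm_tuples \<Longrightarrow> f X \<noteq> 0 \<Longrightarrow> r < rank (apply_perms Q X)"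
proof -
  obtain W\<^sub>0 and h\<^sub>0 :: "'m \<Rightarrow> 'n" where W\<^sub>0: "card W\<^sub>0 = r" "\<exists>X\<in>lowrank r. det (minor_matrix W\<^sub>0 h\<^sub>0 X) \<noteq> 0"
    using exists_lowrank_nonzero_minor less_imp_le[OF assms(2)] less_imp_le[OF assms(3)] by blast
  have exists_minor: "\<exists>Wh. card (fst Wh) = r + 1 \<and>
          (\<exists>X\<in>lowrank r. det (minor_matrix (fst Wh) (snd Wh) (apply_perms Q X)) \<noteq> 0)"
    if Q: "Q \<in> nonconstant_perm_tuples" for Q :: "'n \<Rightarrow> real^'m^'m"
  proof -
    obtain j k where "\<forall>j. Q j \<in> perm_matrices" "Q j \<noteq> Q k"
      using Q unfolding nonconstant_perm_tuples_def by blast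
    then obtain W h where "card W = r + 1"
        "\<exists>X\<in>lowrank r. det (minor_matrix W h (apply_perms Q X)) \<noteq> 0"
      by (rule exists_lowrank_nonzero_minor_apply_perms[OF assms])
    then show ?thesis by (intro exI[of _ "(W, h)"]) simp
  qed
  define Wh where "Wh Q = (SOME Wh. card (fst Wh) = r + 1 \<and>
      (\<exists>X\<in>lowrank r. det (minor_matrix (fst Wh) (snd Wh) (apply_perms Q X)) \<noteq> 0))"
    for Q :: "'n \<Rightarrow> real^'m^'m"
  have Wh: "card (fst (Wh Q)) = r + 1 \<and>
      (\<exists>X\<in>lowrank r. det (minor_matrix (fst (Wh Q)) (snd (Wh Q)) (apply_perms Q X)) \<noteq> 0)"
    if "Q \<in> nonconstant_perm_tuples" for Q
    unfolding Wh_def by (rule someI_ex) (rule exists_minor[OF that])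
  define g where "g Q X = det (minor_matrix (fst (Wh Q)) (snd (Wh Q)) (apply_perms Q X))"
    for Q :: "'n \<Rightarrow> real^'m^'m" and X :: "real^'n^'m"
  define f where "f X = det (minor_matrix W\<^sub>0 h\<^sub>0 X) * (\<Prod>Q\<in>nonconstant_perm_tuples. g Q X)" for X
  have minor\<^sub>0: "(\<lambda>X. det (minor_matrix W\<^sub>0 h\<^sub>0 X)) \<in> poly_fun"
    by (intro poly_fun_det_minor_matrix poly_fun.coord)
  have g: "g Q \<in> poly_fun" for Q
    unfolding g_def by (intro poly_fun_det_minor_matrix poly_fun_apply_perms)
  have g_nonvanishing: "\<exists>X\<in>lowrank r. g Q X \<noteq> 0" if "Q \<in> nonconstant_perm_tuples" for Q
    using Wh[OF that] by (simp add: g_def)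
  have fin: "finite (nonconstant_perm_tuples :: ('n \<Rightarrow> real^'m^'m) set)"
    by (rule finite_nonconstant_perm_tuples)
  show ?thesis
  proof (rule that)
    show "f \<in> poly_fun"
      unfolding f_def by (intro poly_fun.mult poly_fun_prod minor\<^sub>0 g fin)
    show "\<exists>X\<in>lowrank r. f X \<noteq> 0"
      unfolding f_def using less_imp_le[OF assms(2)] g g_nonvanishing W\<^sub>0(2)
      by (intro lowrank_nonvanishing_mult lowrank_nonvanishing_prod poly_fun_prod minor\<^sub>0 g fin) auto
  next
    fix X assume "f X \<noteq> 0"
    then have "det (minor_matrix W\<^sub>0 h\<^sub>0 X) \<noteq> 0" by (auto simp: f_def)
    then show "r \<le> rank X"
      using card_le_rank_if_det_minor_matrix_nonzero W\<^sub>0(1) by blast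
  next
    fix Q :: "'n \<Rightarrow> real^'m^'m" and X assume Q: "Q \<in> nonconstant_perm_tuples" and "f X \<noteq> 0"
    then have "g Q X \<noteq> 0" using fin by (auto simp: f_def)
    then have "card (fst (Wh Q)) \<le> rank (apply_perms Q X)"
      unfolding g_def by (rule card_le_rank_if_det_minor_matrix_nonzero)
    then show "r < rank (apply_perms Q X)" using Wh[OF Q] by simp
  qed
qed

lemma rank_apply_perms_dichotomy:
  fixes X :: "real^'n::finite^'m::finite"
  assumes "rank X = r" "\<And>Q. Q \<in> nonconstant_perm_tuples \<Longrightarrow> r < rank (apply_perms Q X)"
    and "\<forall>j. Q j \<in> perm_matrices"
  shows "r \<le> rank (apply_perms Q X) \<and>
         (rank (apply_perms Q X) = r \<longleftrightarrow> (\<exists>P\<in>perm_matrices. apply_perms Q X = P ** X))"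
proof (cases "Q \<in> nonconstant_perm_tuples")
  case True
  have "apply_perms Q X \<noteq> P ** X" for P
  proof
    assume "apply_perms Q X = P ** X"
    then have "rank (apply_perms Q X) \<le> r" using rank_mul_le_right[of P X] assms(1) by simp
    with assms(2)[OF True] show False by simp
  qed
  then show ?thesis using assms(2)[OF True] by auto
next
  case False
  then have "Q = (\<lambda>_. Q undefined)" using assms(3) by (auto simp: nonconstant_perm_tuples_def)
  then have "apply_perms Q X = Q undefined ** X" by (metis apply_perms_const)
  moreover have "rank (Q undefined ** X) = r"
    using rank_perm_matrix_mult assms(1,3) by blast
  ultimately show ?thesis using assms(3) by auto
qed

theorem theorem1:
  fixes r :: nat
  assumes "0 < r" and "r < CARD('m::finite)" and "r < CARD('n::finite)"
  shows "\<exists>U :: (real^'n^'m) set.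
           zariski_open_in (lowrank r) U \<and> zariski_dense_in (lowrank r) U \<and>
           (\<forall>Xs\<in>U. \<forall>\<Pi>t :: 'n \<Rightarrow> real^'m^'m. (\<forall>j. \<Pi>t j \<in> perm_matrices) \<longrightarrow>
              (\<forall>\<pi> :: 'n \<Rightarrow> real^'m^'m. (\<forall>j. \<pi> j \<in> perm_matrices) \<longrightarrow>
                 r \<le> rank (apply_perms \<pi> (apply_perms \<Pi>t Xs)) \<and>
                 (rank (apply_perms \<pi> (apply_perms \<Pi>t Xs)) = r \<longleftrightarrow>
                    (\<exists>P\<in>perm_matrices. apply_perms \<pi> (apply_perms \<Pi>t Xs) = P ** Xs))))"
proof -
  obtain f :: "real^'n^'m \<Rightarrow> real" where f: "f \<in> poly_fun" "\<exists>X\<in>lowrank r. f X \<noteq> 0"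
      "\<And>X. f X \<noteq> 0 \<Longrightarrow> r \<le> rank X"
      "\<And>Q X. Q \<in> nonconstant_perm_tuples \<Longrightarrow> f X \<noteq> 0 \<Longrightarrow> r < rank (apply_perms Q X)"
    using exists_rank_certificate[OF assms] by blast
  define U where "U = {X \<in> lowrank r. f X \<noteq> 0}"
  have rank_U: "rank X = r" if "X \<in> U" for X
    using that f(3) by (force simp: U_def lowrank_def)
  have "r \<le> rank (apply_perms \<pi> (apply_perms \<Pi>t Xs)) \<and>
        (rank (apply_perms \<pi> (apply_perms \<Pi>t Xs)) = r \<longleftrightarrow>
          (\<exists>P\<in>perm_matrices. apply_perms \<pi> (apply_perms \<Pi>t Xs) = P ** Xs))"
    if "Xs \<in> U" "\<forall>j. \<Pi>t j \<in> perm_matrices" "\<forall>j. \<pi> j \<in> perm_matrices" for Xs \<Pi>t \<pi>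
    unfolding apply_perms_apply_perms
    using that f(4) by (intro rank_apply_perms_dichotomy rank_U perm_matrices_mult_closed allI)
      (auto simp: U_def)
  moreover have "zariski_open_in (lowrank r) U" "zariski_dense_in (lowrank r) U"
    using lowrank_nonvanishing_open_dense[OF less_imp_le[OF assms(2)] f(1,2)] by (simp_all add: U_def)
  ultimately show ?thesis by blast
qed

end
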